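(* Suppose the $L$-smoothness assumption holds and let $\{w_t\}$, $\{z_t\}$, $\{v_t\}$, $\{\hat D_t\}$ be generated by {\tt Scaled L-SVRG} with any step-size $\eta>0$. Then for every $t\ge0$, $$\mathbb{E}\left[\|v_t\|^2_{\hat D_t^{-1}}\right]\le3\,\mathbb{E}\left[\|\nabla P(w_t)\|^2_{\hat D_t^{-1}}\right]+\frac{6L^2}{\alpha}\mathbb{E}\left[\|w_t-z_t\|^2\right].$$
   Context: $P=\frac1n\sum_{i=1}^nf_i$ with $f_i:\mathbb{R}^d\to\mathbb{R}$. $L$-smoothness assumption: each $f_i$ and $P$ are twice differentiable with $L$-Lipschitz gradients. $\|x\|_D^2=x^TDx$. For $J\subseteq[n]$, $\nabla^2P_J(w)=\frac1{|J|}\sum_{j\in J}\nabla^2 f_j(w)$; $\odot$ is the Hadamard product; $\mathrm{diag}(x)$ is the diagonal matrix with the entries of $x$. Preconditioner (parameters $\alpha>0$, $\beta\in(0,1)$, $m\ge1$): $D_0=\frac1m\sum_{j=1}^m\mathrm{diag}(z'_j\odot\nabla^2P_{\mathcal{J}_j}(w_0)z'_j)$, $D_t=\beta D_{t-1}+(1-\beta)\mathrm{diag}(z'_t\odot\nabla^2P_{\mathcal{J}_t}(w_t)z'_t)$ for $t\ge1$, with independent Rademacher vectors $z'$ and random index sets $\mathcal{J}\subseteq[n]$, independent of the gradient samples; $\hat D_t$ diagonal with $(\hat D_t)_{ii}=\max\{\alpha,|(D_t)_{ii}|\}$. {\tt Scaled L-SVRG} (probability $p\in(0,1]$): $z_0=w_0$,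 $v_0=\nabla P(w_0)$; for $t\ge0$: $w_{t+1}=w_t-\eta\hat D_t^{-1}v_t$; $z_{t+1}=w_t$ with probability $p$ and $z_{t+1}=z_t$ with probability $1-p$; draw $i_{t+1}$ uniformly from $[n]$ independently; $v_{t+1}=\nabla f_{i_{t+1}}(w_{t+1})-\nabla f_{i_{t+1}}(z_{t+1})+\nabla P(z_{t+1})$; update $\hat D_{t+1}$. *)

theory Defs
  imports "HOL-Probability.Probability"
begin

definition diag_mat :: "real^'d \<Rightarrow> real^'d^'d" where
  "diag_mat x = (\<chi> i j. if i = j then x $ i else 0)"

definition hadamard :: "real^'d \<Rightarrow> real^'d \<Rightarrow> real^'d" where
  "hadamard x y = (\<chi> i. x $ i * y $ i)"

definition wnorm2 :: "real^'d^'d \<Rightarrow> real^'d \<Rightarrow> real" where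
  "wnorm2 D x = x \<bullet> (D *v x)"

definition hessJ :: "(nat \<Rightarrow> real^'d \<Rightarrow> real^'d^'d) \<Rightarrow> nat set \<Rightarrow> real^'d \<Rightarrow> real^'d^'d" where
  "hessJ H J w = (1 / real (card J)) *\<^sub>R (\<Sum>j\<in>J. H j w)"

definition rad_vecs :: "(real^'d) set" where
  "rad_vecs = {s. \<forall>i. s $ i = 1 \<or> s $ i = -1}"

text \<open>Encoding of all the primitive random sources of the algorithm into one family,
  so that their joint (mutual) independence can be stated with indep_vars.\<close>
datatype src = SCoin nat | SIdx nat | SRad nat | SRad0 nat | SJ nat | SJ0 nat

datatype 'd rval = VB bool | VN nat | VV "real^'d" | VS "nat set"

fun src_var ::
  "(nat \<Rightarrow> 'w \<Rightarrow> bool) \<Rightarrow> (nat \<Rightarrow> 'w \<Rightarrow> nat) \<Rightarrow> (nat \<Rightarrow> 'w \<Rightarrow> real^'d) \<Rightarrow>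
   (nat \<Rightarrow> 'w \<Rightarrow> real^'d) \<Rightarrow> (nat \<Rightarrow> 'w \<Rightarrow> nat set) \<Rightarrow> (nat \<Rightarrow> 'w \<Rightarrow> nat set) \<Rightarrow>
   src \<Rightarrow> 'w \<Rightarrow> 'd rval" where
  "src_var coin idx rz rz0 J J0 (SCoin t) = (\<lambda>\<omega>. VB (coin t \<omega>))"
| "src_var coin idx rz rz0 J J0 (SIdx t) = (\<lambda>\<omega>. VN (idx t \<omega>))"
| "src_var coin idx rz rz0 J J0 (SRad t) = (\<lambda>\<omega>. VV (rz t \<omega>))"
| "src_var coin idx rz rz0 J J0 (SRad0 j) = (\<lambda>\<omega>. VV (rz0 j \<omega>))"
| "src_var coin idx rz rz0 J J0 (SJ t) = (\<lambda>\<omega>. VS (J t \<omega>))"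
| "src_var coin idx rz rz0 J J0 (SJ0 j) = (\<lambda>\<omega>. VS (J0 j \<omega>))"

end

theory Submission
  imports Defs
begin

text \<open>The bound holds pointwise, so no probabilistic argument is needed. For \<open>t > 0\<close> and
  \<open>i = i\<^sub>t\<close> write
  \<open>v\<^sub>t = \<nabla>P(w\<^sub>t) + (\<nabla>f\<^sub>i(w\<^sub>t) - \<nabla>f\<^sub>i(z\<^sub>t)) + (\<nabla>P(z\<^sub>t) - \<nabla>P(w\<^sub>t))\<close>
  and use \<open>\<parallel>a + b + c\<parallel>\<^sup>2 \<le> 3(\<parallel>a\<parallel>\<^sup>2 + \<parallel>b\<parallel>\<^sup>2 + \<parallel>c\<parallel>\<^sup>2)\<close> in the weighted norm of the
  diagonal matrix \<open>D\<^sub>t\<^sup>-\<^sup>1\<close>, whose entries lie in \<open>(0, 1/\<alpha>]\<close> because of the clipping at \<open>\<alpha>\<close>.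
  The last two terms are then bounded by \<open>L\<^sup>2/\<alpha> \<parallel>w\<^sub>t - z\<^sub>t\<parallel>\<^sup>2\<close> each, by
  \<open>L\<close>-Lipschitz continuity of the gradients.\<close>

lemma matrix_inv_diag_mat:
  fixes e :: "real^'d"
  assumes "\<And>i. e $ i \<noteq> 0"
  shows "matrix_inv (diag_mat e) = diag_mat (\<chi> i. 1 / e $ i)"
proof -
  let ?A = "diag_mat e" and ?B = "diag_mat (\<chi> i. 1 / e $ i)"
  have AB: "?A ** ?B = mat 1" and "?B ** ?A = mat 1"
    using assms by (auto simp: diag_mat_def matrix_matrix_mult_def mat_def vec_eq_iff
        if_distrib[where f="\<lambda>x. x * _"] if_distrib[where f="\<lambda>x. _ * x"] cong: if_cong)
  then have "\<exists>A'. ?A ** A' = mat 1 \<and> A' ** ?A = mat 1"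
    by blast
  then have left_inv: "matrix_inv ?A ** ?A = mat 1"
    unfolding matrix_inv_def by (rule someI2_ex) blast
  then have "matrix_inv ?A = matrix_inv ?A ** (?A ** ?B)"
    using AB by simp
  also have "\<dots> = ?B"
    by (simp add: matrix_mul_assoc left_inv)
  finally show ?thesis .
qed

lemma wnorm2_diag_mat: "wnorm2 (diag_mat d) x = (\<Sum>i\<in>UNIV. d $ i * (x $ i)\<^sup>2)"
  unfolding wnorm2_def diag_mat_def inner_vec_def matrix_vector_mult_def
  by (auto simp: if_distrib[where f="\<lambda>x. x * _"] power2_eq_square cong: if_cong intro!: sum.cong)

lemma wnorm2_diag_mat_nonneg:
  assumes "\<And>i. 0 \<le> d $ i"
  shows "0 \<le> wnorm2 (diag_mat d) x"
  unfolding wnorm2_diag_mat using assms by (simp add: sum_nonneg)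

lemma wnorm2_diag_mat_add3_le:
  assumes "\<And>i. 0 \<le> d $ i"
  shows "wnorm2 (diag_mat d) (a + b + c)
    \<le> 3 * wnorm2 (diag_mat d) a + 3 * wnorm2 (diag_mat d) b + 3 * wnorm2 (diag_mat d) c"
proof -
  have "d $ i * ((a + b + c) $ i)\<^sup>2
      \<le> 3 * (d $ i * (a $ i)\<^sup>2) + 3 * (d $ i * (b $ i)\<^sup>2) + 3 * (d $ i * (c $ i)\<^sup>2)" for i
  proof -
    have "((a + b + c) $ i)\<^sup>2 \<le> 3 * (a $ i)\<^sup>2 + 3 * (b $ i)\<^sup>2 + 3 * (c $ i)\<^sup>2"
      using sum_squares_ge_zero[of "a $ i - b $ i" "b $ i - c $ i"] zero_le_power2[of "a $ i - c $ i"]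
      by (simp add: power2_eq_square algebra_simps)
    from mult_left_mono[OF this assms] show ?thesis
      by (simp add: algebra_simps)
  qed
  then show ?thesis
    unfolding wnorm2_diag_mat by (auto simp: sum_distrib_left simp flip: sum.distrib intro: sum_mono)
qed

lemma wnorm2_diag_mat_le_norm:
  assumes "\<And>i. 0 \<le> d $ i" and "\<And>i. d $ i \<le> c"
  shows "wnorm2 (diag_mat d) x \<le> c * (norm x)\<^sup>2"
proof -
  have "wnorm2 (diag_mat d) x \<le> (\<Sum>i\<in>UNIV. c * (x $ i)\<^sup>2)"
    unfolding wnorm2_diag_mat using assms by (intro sum_mono mult_right_mono) auto
  also have "\<dots> = c * (norm x)\<^sup>2"
    unfolding power2_norm_eq_inner inner_vec_def by (simp add: sum_distrib_left power2_eq_square)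
  finally show ?thesis .
qed

lemma wnorm2_diag_mat_svrg_le:
  fixes g G :: "real^'d \<Rightarrow> real^'d"
  assumes d_nonneg: "\<And>i. 0 \<le> d $ i" and d_le: "\<And>i. d $ i \<le> c"
    and g_lip: "norm (g x - g y) \<le> L * norm (x - y)"
    and G_lip: "norm (G x - G y) \<le> L * norm (x - y)"
  shows "wnorm2 (diag_mat d) (g x - g y + G y)
    \<le> 3 * wnorm2 (diag_mat d) (G x) + 6 * L\<^sup>2 * c * (norm (x - y))\<^sup>2"
proof -
  have lip_term: "wnorm2 (diag_mat d) u \<le> L\<^sup>2 * c * (norm (x - y))\<^sup>2"
    if "norm u \<le> L * norm (x - y)" for u
  proof -
    have "wnorm2 (diag_mat d) u \<le> c * (norm u)\<^sup>2"
      by (rule wnorm2_diag_mat_le_norm[OF d_nonneg d_le])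
    also have "\<dots> \<le> c * (L * norm (x - y))\<^sup>2"
      using that order_trans[OF d_nonneg d_le] by (intro mult_left_mono power_mono) auto
    finally show ?thesis
      by (simp add: power_mult_distrib algebra_simps)
  qed
  have "g x - g y + G y = G x + (g x - g y) + (G y - G x)"
    by simp
  then have "wnorm2 (diag_mat d) (g x - g y + G y)
      \<le> 3 * wnorm2 (diag_mat d) (G x) + 3 * wnorm2 (diag_mat d) (g x - g y)
        + 3 * wnorm2 (diag_mat d) (G y - G x)"
    using wnorm2_diag_mat_add3_le[OF d_nonneg] by presburger
  with lip_term[OF g_lip] lip_term[OF G_lip[unfolded norm_minus_commute[of "G x"]]] show ?thesis
    by linarith
qed

lemma borel_measurable_vec_nth [measurable (raw)]:
  fixes f :: "'a \<Rightarrow> 'b::real_normed_vector^'n"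
  shows "f \<in> borel_measurable M \<Longrightarrow> (\<lambda>x. f x $ i) \<in> borel_measurable M"
  by (rule measurable_compose[OF _ borel_measurable_continuous_onI]) (auto intro!: continuous_intros)

lemma borel_measurable_wnorm2_diag_mat:
  assumes "\<And>i. (\<lambda>\<omega>. d \<omega> $ i) \<in> borel_measurable M" and "x \<in> borel_measurable M"
  shows "(\<lambda>\<omega>. wnorm2 (diag_mat (d \<omega>)) (x \<omega>)) \<in> borel_measurable M"
  unfolding wnorm2_diag_mat using assms by measurable

lemma nn_integral_le_linear_combination:
  assumes "f \<in> borel_measurable M" "g \<in> borel_measurable M" "0 \<le> a" "0 \<le> b"
    and "\<And>\<omega>. \<omega> \<in> space M \<Longrightarrow> 0 \<le> f \<omega>" "\<And>\<omega>. \<omega> \<in> space M \<Longrightarrow> 0 \<le> g \<omega>"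
    and "\<And>\<omega>. \<omega> \<in> space M \<Longrightarrow> h \<omega> \<le> a * f \<omega> + b * g \<omega>"
  shows "(\<integral>\<^sup>+\<omega>. ennreal (h \<omega>) \<partial>M)
    \<le> ennreal a * (\<integral>\<^sup>+\<omega>. ennreal (f \<omega>) \<partial>M) + ennreal b * (\<integral>\<^sup>+\<omega>. ennreal (g \<omega>) \<partial>M)"
proof -
  have "(\<integral>\<^sup>+\<omega>. ennreal (h \<omega>) \<partial>M) \<le> (\<integral>\<^sup>+\<omega>. ennreal a * ennreal (f \<omega>) + ennreal b * ennreal (g \<omega>) \<partial>M)"
    using assms by (intro nn_integral_mono) (simp add: ennreal_leI flip: ennreal_mult ennreal_plus)
  also have "\<dots> = ennreal a * (\<integral>\<^sup>+\<omega>. ennreal (f \<omega>) \<partial>M) + ennreal b * (\<integral>\<^sup>+\<omega>. ennreal (g \<omega>) \<partial>M)"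
    using assms by (simp add: nn_integral_add nn_integral_cmult)
  finally show ?thesis .
qed

theorem lemma6:
  fixes M :: "'w measure"
    and n m :: nat
    and f :: "nat \<Rightarrow> real^'d \<Rightarrow> real"
    and gf :: "nat \<Rightarrow> real^'d \<Rightarrow> real^'d"
    and H :: "nat \<Rightarrow> real^'d \<Rightarrow> real^'d^'d"
    and P :: "real^'d \<Rightarrow> real"
    and gP :: "real^'d \<Rightarrow> real^'d"
    and HP :: "real^'d \<Rightarrow> real^'d^'d"
    and L \<alpha> \<beta> p \<eta> :: real
    and w0 :: "real^'d"
    and coin :: "nat \<Rightarrow> 'w \<Rightarrow> bool"
    and idx :: "nat \<Rightarrow> 'w \<Rightarrow> nat"
    and rz rz0 :: "nat \<Rightarrow> 'w \<Rightarrow> real^'d"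
    and J J0 :: "nat \<Rightarrow> 'w \<Rightarrow> nat set"
    and w z v :: "nat \<Rightarrow> 'w \<Rightarrow> real^'d"
    and D Dh :: "nat \<Rightarrow> 'w \<Rightarrow> real^'d^'d"
    and t :: nat
  assumes prob: "prob_space M"
    (* problem and L-smoothness *)
    and n_pos: "n \<ge> 1"
    and P_def: "\<And>x. P x = (1 / real n) * (\<Sum>i<n. f i x)"
    and f_grad: "\<And>i x. i < n \<Longrightarrow> (f i has_derivative (\<lambda>h. gf i x \<bullet> h)) (at x)"
    and f_hess: "\<And>i x. i < n \<Longrightarrow> (gf i has_derivative (\<lambda>h. H i x *v h)) (at x)"
    and f_lip: "\<And>i x y. i < n \<Longrightarrow> norm (gf i x - gf i y) \<le> L * norm (x - y)"
    and P_grad: "\<And>x. (P has_derivative (\<lambda>h. gP x \<bullet> h)) (at x)"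
    and P_hess: "\<And>x. (gP has_derivative (\<lambda>h. HP x *v h)) (at x)"
    and P_lip: "\<And>x y. norm (gP x - gP y) \<le> L * norm (x - y)"
    (* parameters *)
    and alpha_pos: "\<alpha> > 0"
    and beta: "0 < \<beta>" "\<beta> < 1"
    and m_pos: "m \<ge> 1"
    and p_range: "0 < p" "p \<le> 1"
    and eta_pos: "\<eta> > 0"
    (* randomness: mutually independent primitive random sources *)
    and indep: "prob_space.indep_vars M (\<lambda>_. count_space UNIV)
                  (src_var coin idx rz rz0 J J0) UNIV"
    and coin_dist: "\<And>s. s \<ge> 1 \<Longrightarrow> measure M {\<omega> \<in> space M. coin s \<omega>} = p"
    and idx_range: "\<And>s \<omega>. s \<ge> 1 \<Longrightarrow> \<omega> \<in> space M \<Longrightarrow> idx s \<omega> < n"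
    and idx_dist: "\<And>s i. s \<ge> 1 \<Longrightarrow> i < n \<Longrightarrow>
                     measure M {\<omega> \<in> space M. idx s \<omega> = i} = 1 / real n"
    and rz_range: "\<And>s \<omega>. s \<ge> 1 \<Longrightarrow> \<omega> \<in> space M \<Longrightarrow> rz s \<omega> \<in> rad_vecs"
    and rz_dist: "\<And>s r. s \<ge> 1 \<Longrightarrow> r \<in> rad_vecs \<Longrightarrow>
                    measure M {\<omega> \<in> space M. rz s \<omega> = r} = 1 / 2 ^ CARD('d)"
    and rz0_range: "\<And>j \<omega>. j < m \<Longrightarrow> \<omega> \<in> space M \<Longrightarrow> rz0 j \<omega> \<in> rad_vecs"
    and rz0_dist: "\<And>j r. j < m \<Longrightarrow> r \<in> rad_vecs \<Longrightarrow>
                    measure M {\<omega> \<in> space M. rz0 j \<omega> = r} = 1 / 2 ^ CARD('d)"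
    and J_range: "\<And>s \<omega>. s \<ge> 1 \<Longrightarrow> \<omega> \<in> space M \<Longrightarrow> J s \<omega> \<subseteq> {..<n} \<and> J s \<omega> \<noteq> {}"
    and J0_range: "\<And>j \<omega>. j < m \<Longrightarrow> \<omega> \<in> space M \<Longrightarrow> J0 j \<omega> \<subseteq> {..<n} \<and> J0 j \<omega> \<noteq> {}"
    (* the iterates are random variables *)
    and w_meas: "\<And>s. w s \<in> borel_measurable M"
    and z_meas: "\<And>s. z s \<in> borel_measurable M"
    and v_meas: "\<And>s. v s \<in> borel_measurable M"
    and Dh_meas: "\<And>s. Dh s \<in> borel_measurable M"
    (* Scaled L-SVRG *)
    and w_init: "\<And>\<omega>. \<omega> \<in> space M \<Longrightarrow> w 0 \<omega> = w0"
    and z_init: "\<And>\<omega>. \<omega> \<in> space M \<Longrightarrow> z 0 \<omega> = w 0 \<omega>"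
    and v_init: "\<And>\<omega>. \<omega> \<in> space M \<Longrightarrow> v 0 \<omega> = gP (w 0 \<omega>)"
    and D_init: "\<And>\<omega>. \<omega> \<in> space M \<Longrightarrow>
       D 0 \<omega> = (1 / real m) *\<^sub>R
         (\<Sum>j<m. diag_mat (hadamard (rz0 j \<omega>) (hessJ H (J0 j \<omega>) (w 0 \<omega>) *v rz0 j \<omega>)))"
    and D_step: "\<And>s \<omega>. \<omega> \<in> space M \<Longrightarrow>
       D (Suc s) \<omega> = \<beta> *\<^sub>R D s \<omega> + (1 - \<beta>) *\<^sub>R
         diag_mat (hadamard (rz (Suc s) \<omega>) (hessJ H (J (Suc s) \<omega>) (w (Suc s) \<omega>) *v rz (Suc s) \<omega>))"
    and Dh_def: "\<And>s \<omega>. \<omega> \<in> space M \<Longrightarrow>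
       Dh s \<omega> = diag_mat (\<chi> i. max \<alpha> \<bar>D s \<omega> $ i $ i\<bar>)"
    and w_step: "\<And>s \<omega>. \<omega> \<in> space M \<Longrightarrow>
       w (Suc s) \<omega> = w s \<omega> - \<eta> *\<^sub>R (matrix_inv (Dh s \<omega>) *v v s \<omega>)"
    and z_step: "\<And>s \<omega>. \<omega> \<in> space M \<Longrightarrow>
       z (Suc s) \<omega> = (if coin (Suc s) \<omega> then w s \<omega> else z s \<omega>)"
    and v_step: "\<And>s \<omega>. \<omega> \<in> space M \<Longrightarrow>
       v (Suc s) \<omega> = gf (idx (Suc s) \<omega>) (w (Suc s) \<omega>) - gf (idx (Suc s) \<omega>) (z (Suc s) \<omega>)
                      + gP (z (Suc s) \<omega>)"
  shows "(\<integral>\<^sup>+\<omega>. ennreal (wnorm2 (matrix_inv (Dh t \<omega>)) (v t \<omega>)) \<partial>M)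
           \<le> 3 * (\<integral>\<^sup>+\<omega>. ennreal (wnorm2 (matrix_inv (Dh t \<omega>)) (gP (w t \<omega>))) \<partial>M)
             + ennreal (6 * L\<^sup>2 / \<alpha>) * (\<integral>\<^sup>+\<omega>. ennreal ((norm (w t \<omega> - z t \<omega>))\<^sup>2) \<partial>M)"
proof -
  define d where "d \<omega> = (\<chi> i. 1 / Dh t \<omega> $ i $ i)" for \<omega>
  have d_pos: "0 < d \<omega> $ i" and d_le: "d \<omega> $ i \<le> 1 / \<alpha>" if "\<omega> \<in> space M" for \<omega> i
    using Dh_def[OF that] alpha_pos by (auto simp: d_def diag_mat_def frac_le)
  have Dh_inv: "matrix_inv (Dh t \<omega>) = diag_mat (d \<omega>)" if "\<omega> \<in> space M" for \<omega>
  proof -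
    have "Dh t \<omega> = diag_mat (\<chi> i. max \<alpha> \<bar>D t \<omega> $ i $ i\<bar>)"
      by (rule Dh_def[OF that])
    also have "matrix_inv \<dots> = diag_mat (d \<omega>)"
      using alpha_pos Dh_def[OF that] by (subst matrix_inv_diag_mat) (auto simp: d_def diag_mat_def)
    finally show ?thesis .
  qed
  have gP_meas: "gP \<in> borel_measurable borel"
    using P_hess by (intro borel_measurable_continuous_onI has_derivative_continuous_on) blast
  have d_meas: "(\<lambda>\<omega>. d \<omega> $ i) \<in> borel_measurable M" for i
    unfolding d_def vec_lambda_beta
    by (intro borel_measurable_divide borel_measurable_const borel_measurable_vec_nth Dh_meas)
  have pointwise: "wnorm2 (matrix_inv (Dh t \<omega>)) (v t \<omega>)
      \<le> 3 * wnorm2 (diag_mat (d \<omega>)) (gP (w t \<omega>)) + 6 * L\<^sup>2 / \<alpha> * (norm (w t \<omega> - z t \<omega>))\<^sup>2"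
    if \<omega>: "\<omega> \<in> space M" for \<omega>
  proof (cases t)
    case 0
    then have "v t \<omega> = gP (w t \<omega>)"
      using v_init[OF \<omega>] by simp
    moreover have "0 \<le> wnorm2 (diag_mat (d \<omega>)) (gP (w t \<omega>))"
      using d_pos[OF \<omega>] by (intro wnorm2_diag_mat_nonneg less_imp_le)
    moreover have "0 \<le> 6 * L\<^sup>2 / \<alpha> * (norm (w t \<omega> - z t \<omega>))\<^sup>2"
      using alpha_pos by simp
    ultimately show ?thesis
      unfolding Dh_inv[OF \<omega>] by simp
  next
    case (Suc s)
    have "idx t \<omega> < n"
      using idx_range[OF _ \<omega>] Suc by simp
    from wnorm2_diag_mat_svrg_le[OF less_imp_le[OF d_pos[OF \<omega>]] d_le[OF \<omega>]
        f_lip[OF this, of "w t \<omega>" "z t \<omega>"] P_lip[of "w t \<omega>" "z t \<omega>"]]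
    show ?thesis
      using Suc v_step[OF \<omega>] unfolding Dh_inv[OF \<omega>] by simp
  qed
  have "(\<integral>\<^sup>+\<omega>. ennreal (wnorm2 (matrix_inv (Dh t \<omega>)) (v t \<omega>)) \<partial>M)
      \<le> ennreal 3 * (\<integral>\<^sup>+\<omega>. ennreal (wnorm2 (diag_mat (d \<omega>)) (gP (w t \<omega>))) \<partial>M)
        + ennreal (6 * L\<^sup>2 / \<alpha>) * (\<integral>\<^sup>+\<omega>. ennreal ((norm (w t \<omega> - z t \<omega>))\<^sup>2) \<partial>M)"
  proof (rule nn_integral_le_linear_combination[OF _ _ _ _ _ _ pointwise])
    show "(\<lambda>\<omega>. wnorm2 (diag_mat (d \<omega>)) (gP (w t \<omega>))) \<in> borel_measurable M"
      using d_meas measurable_compose[OF w_meas gP_meas] by (rule borel_measurable_wnorm2_diag_mat)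
    show "0 \<le> wnorm2 (diag_mat (d \<omega>)) (gP (w t \<omega>))" if "\<omega> \<in> space M" for \<omega>
      using d_pos[OF that] by (intro wnorm2_diag_mat_nonneg less_imp_le)
    show "(\<lambda>\<omega>. (norm (w t \<omega> - z t \<omega>))\<^sup>2) \<in> borel_measurable M"
      using w_meas z_meas by measurable
  qed (use alpha_pos in simp_all)
  also have "(\<integral>\<^sup>+\<omega>. ennreal (wnorm2 (diag_mat (d \<omega>)) (gP (w t \<omega>))) \<partial>M)
      = (\<integral>\<^sup>+\<omega>. ennreal (wnorm2 (matrix_inv (Dh t \<omega>)) (gP (w t \<omega>))) \<partial>M)"
    by (intro nn_integral_cong) (simp add: Dh_inv)
  finally show ?thesis
    by (simp only: ennreal_numeral)
qed

end
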